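(* Let $q=p^n$ ($p$ any prime), $k\ge1$, $r=\gcd(k,q-1)$, $s=\gcd(k,q+1)$. Then, viewing $D_k$ as a map ${\mathbb F}_q\to{\mathbb F}_q$, $D_k({\mathbb F}_q)=\langle\mu_{(q-1)/r}\rangle\cup\langle\mu_{(q+1)/s}\rangle$.
   Context: $D_k\in\mathbb Z[x]$: $D_0=2$, $D_1=x$, $D_{k+2}=xD_{k+1}-D_k$ (so $D_k(u+1/u)=u^k+u^{-k}$). For $d$ not divisible by $p$, $\mu_d=\{a\in\overline{{\mathbb F}}_p^\times:a^d=1\}$ and $\langle\mu_d\rangle=\{a+1/a:a\in\mu_d\}$. *)

theory Defs
  imports "HOL-Computational_Algebra.Polynomial"
begin

fun dickson :: "nat \<Rightarrow> int poly" where
  "dickson 0 = [:2:]"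
| "dickson (Suc 0) = [:0, 1:]"
| "dickson (Suc (Suc k)) = [:0, 1:] * dickson (Suc k) - dickson k"

definition mu :: "nat \<Rightarrow> 'a::field set" where
  "mu d = {a. a \<noteq> 0 \<and> a ^ d = 1}"

definition mu_sym :: "nat \<Rightarrow> 'a::field set" where
  "mu_sym d = (\<lambda>a. a + inverse a) ` mu d"

text \<open>The subfield F_q of the ambient field, as the set of roots of x^q - x.\<close>
definition Fq :: "nat \<Rightarrow> 'a::field set" where
  "Fq q = {x. x ^ q = x}"

end

theory Submission
  imports Defs "HOL-Computational_Algebra.Primes" "HOL-Number_Theory.Cong"
begin

text \<open>
  In an algebraically closed field every \<open>x\<close> is \<open>u + 1/u\<close> for some \<open>u \<noteq> 0\<close>, and then
  \<open>D\<^sub>k(x) = u\<^sup>k + 1/u\<^sup>k\<close>. Since the Frobenius map gives \<open>x\<^sup>q = u\<^sup>q + 1/u\<^sup>q\<close>, and \<open>v + 1/v\<close>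
  determines \<open>v\<close> up to inversion, \<open>x \<in> \<bbbF>\<^sub>q\<close> iff \<open>u\<^sup>q = u\<close> or \<open>u\<^sup>q = 1/u\<close>, i.e. iff
  \<open>u \<in> \<mu>(q - 1) \<union> \<mu>(q + 1)\<close>. So \<open>D\<^sub>k(\<bbbF>\<^sub>q)\<close> is the image under \<open>w \<mapsto> w + 1/w\<close> of the
  \<open>k\<close>-th powers of \<open>\<mu>(q - 1) \<union> \<mu>(q + 1)\<close>, and the \<open>k\<close>-th power map sends \<open>\<mu>(m)\<close> onto
  \<open>\<mu>(m / gcd(k, m))\<close> (surjectively, by Bezout and the existence of roots).
\<close>

lemma map_poly_of_int_diff:
  "map_poly (of_int :: int \<Rightarrow> 'a::comm_ring_1) (p - q) = map_poly of_int p - map_poly of_int q"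
  by (rule poly_eqI) (simp add: coeff_map_poly)

lemma poly_dickson_add_inverse:
  fixes u :: "'a::field"
  assumes "u \<noteq> 0"
  shows "poly (map_poly of_int (dickson k)) (u + inverse u) = u ^ k + inverse u ^ k"
proof (induction k rule: dickson.induct)
  case (3 k)
  let ?D = "\<lambda>j. poly (map_poly (of_int :: int \<Rightarrow> 'a) (dickson j)) (u + inverse u)"
  have "?D (Suc (Suc k)) = (u + inverse u) * ?D (Suc k) - ?D k"
    by (simp add: map_poly_of_int_diff map_poly_pCons del: dickson.simps(2))
  also have "\<dots> = u ^ Suc (Suc k) + inverse u ^ Suc (Suc k)"
    using 3 assms by (simp add: field_simps)
  finally show ?case .
qed (simp_all add: map_poly_pCons)

lemma power_cong_eq:
  fixes t :: "'a::comm_monoid_mult"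
  assumes "t ^ m = 1" and "[a = b] (mod m)"
  shows "t ^ a = t ^ b"
proof -
  have mod_exp: "t ^ c = t ^ (c mod m)" for c
  proof -
    have "t ^ c = (t ^ m) ^ (c div m) * t ^ (c mod m)"
      by (metis mult_div_mod_eq power_add power_mult)
    then show ?thesis using assms(1) by simp
  qed
  show ?thesis
    using assms(2) by (metis mod_exp cong_def)
qed

lemma power_mem_mu_div_gcd:
  fixes u :: "'a::field"
  assumes "u \<in> mu m"
  shows "u ^ k \<in> mu (m div gcd k m)"
proof -
  have "(u ^ k) ^ (m div gcd k m) = (u ^ m) ^ (k div gcd k m)"
    by (simp flip: power_mult add: div_mult_swap mult.commute)
  then show ?thesis
    using assms by (simp add: mu_def)
qed

lemma power_image_mu:
  fixes k :: nat
  assumes "k > 0"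
  shows "(\<lambda>u. u ^ k) ` mu m = (mu (m div gcd k m) :: 'a::alg_closed_field set)"
proof (intro equalityI subsetI)
  fix w :: 'a
  assume w: "w \<in> mu (m div gcd k m)"
  define g where "g = gcd k m"
  have "g > 0"
    using assms by (simp add: g_def)
  then obtain t where t: "t ^ g = w"
    using nth_root_exists by blast
  have "t \<noteq> 0"
    using w t \<open>g > 0\<close> by (auto simp: mu_def)
  have "t ^ m = w ^ (m div g)"
    by (simp add: g_def flip: t power_mult)
  with w have tm: "t ^ m = 1"
    by (simp add: mu_def g_def)
  obtain x where x: "[k * x = g] (mod m)"
    using cong_solve_nat unfolding g_def by blast
  \<comment> \<open>\<open>t\<^sup>x\<close> is a \<open>k\<close>-th root of \<open>w\<close> because \<open>k x \<equiv> gcd k m (mod m)\<close> and \<open>t\<^sup>m = 1\<close>.\<close>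
  have "(t ^ x) ^ k = w"
    using power_cong_eq[OF tm x] t by (simp flip: power_mult add: mult.commute)
  moreover have "t ^ x \<in> mu m"
    using tm \<open>t \<noteq> 0\<close> by (simp add: mu_def flip: power_mult add: mult.commute power_mult)
  ultimately show "w \<in> (\<lambda>u. u ^ k) ` mu m"
    by (metis image_eqI)
qed (auto intro: power_mem_mu_div_gcd)

lemma ex_add_inverse_eq:
  fixes x :: "'a::alg_closed_field"
  obtains u where "u \<noteq> 0" and "x = u + inverse u"
proof -
  obtain u :: 'a where u: "poly [:1, -x, 1:] u = 0"
    using alg_closed_imp_poly_has_root[of "[:1, -x, 1:]"] by auto
  then have "u \<noteq> 0"
    by auto
  moreover from u have "x = u + inverse u"
    using \<open>u \<noteq> 0\<close> by (simp add: field_simps)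
  ultimately show ?thesis
    using that by blast
qed

lemma add_inverse_eq_add_inverse_iff:
  fixes u v :: "'a::field"
  assumes "u \<noteq> 0" and "v \<noteq> 0"
  shows "v + inverse v = u + inverse u \<longleftrightarrow> v = u \<or> v = inverse u"
proof -
  have "v + inverse v = u + inverse u \<longleftrightarrow> (v - u) * (v * u - 1) = 0"
    using assms by (simp add: field_simps)
  also have "\<dots> \<longleftrightarrow> v = u \<or> v * u = 1"
    by simp
  also have "\<dots> \<longleftrightarrow> v = u \<or> v = inverse u"
    using assms by (auto simp: field_simps)
  finally show ?thesis .
qed

lemma mem_mu_diff_one_iff:
  fixes u :: "'a::field"
  assumes "q > 0"
  shows "u \<in> mu (q - 1) \<longleftrightarrow> u \<noteq> 0 \<and> u ^ q = u"
proof -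
  have "u ^ q = u * u ^ (q - 1)"
    using assms by (simp flip: power_Suc)
  then show ?thesis
    by (auto simp: mu_def)
qed

lemma mem_mu_Suc_iff:
  fixes u :: "'a::field"
  shows "u \<in> mu (Suc q) \<longleftrightarrow> u \<noteq> 0 \<and> u ^ q = inverse u"
  by (auto simp: mu_def field_simps)

lemma Fq_eq_add_inverse_image:
  assumes "prime CHAR('a::alg_closed_field)" and "q = CHAR('a) ^ n"
  shows "(Fq q :: 'a set) = (\<lambda>u. u + inverse u) ` (mu (q - 1) \<union> mu (q + 1))"
proof -
  have "q > 0"
    using assms by (simp add: prime_gt_0_nat)
  have frobenius: "(u + inverse u) ^ q = u ^ q + inverse (u ^ q)" for u :: 'a
    using freshmans_dream'[OF assms] by (simp add: power_inverse)
  have sym_mem_Fq_iff: "u + inverse u \<in> Fq q \<longleftrightarrow> u \<in> mu (q - 1) \<union> mu (q + 1)"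
    if "u \<noteq> 0" for u :: 'a
  proof -
    have "u + inverse u \<in> Fq q \<longleftrightarrow> u ^ q = u \<or> u ^ q = inverse u"
      using that add_inverse_eq_add_inverse_iff[of u "u ^ q"] by (simp add: Fq_def frobenius)
    also have "\<dots> \<longleftrightarrow> u \<in> mu (q - 1) \<union> mu (q + 1)"
      using that mem_mu_diff_one_iff[OF \<open>q > 0\<close>, of u] mem_mu_Suc_iff[of u q] by auto
    finally show ?thesis .
  qed
  show ?thesis
  proof (intro equalityI subsetI)
    fix x :: 'a
    assume "x \<in> Fq q"
    obtain u where "u \<noteq> 0" and "x = u + inverse u"
      using ex_add_inverse_eq .
    with \<open>x \<in> Fq q\<close> show "x \<in> (\<lambda>u. u + inverse u) ` (mu (q - 1) \<union> mu (q + 1))"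
      using sym_mem_Fq_iff by blast
  qed (use sym_mem_Fq_iff in \<open>auto simp: mu_def\<close>)
qed

theorem proposition2p4:
  fixes p n k q r s :: nat
  assumes "prime p"
    and "CHAR('a::alg_closed_field) = p"
    and "n \<ge> 1"
    and "q = p ^ n"
    and "k \<ge> 1"
    and "r = gcd k (q - 1)"
    and "s = gcd k (q + 1)"
  shows "(\<lambda>x. poly (map_poly (of_int :: int \<Rightarrow> 'a) (dickson k)) x) ` Fq q
           = mu_sym ((q - 1) div r) \<union> mu_sym ((q + 1) div s)"
proof -
  let ?sym = "\<lambda>u :: 'a. u + inverse u"
  have Fq: "Fq q = ?sym ` (mu (q - 1) \<union> mu (q + 1))"
    by (rule Fq_eq_add_inverse_image) (use assms(1,2,4) in simp_all)
  have "(\<lambda>x. poly (map_poly of_int (dickson k)) x) ` Fq q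
      = ?sym ` ((\<lambda>u. u ^ k) ` mu (q - 1) \<union> (\<lambda>u. u ^ k) ` mu (q + 1))"
    unfolding Fq image_image image_Un
    by (intro arg_cong2[where f = "(\<union>)"] image_cong refl)
       (auto simp: poly_dickson_add_inverse power_inverse mu_def)
  also have "\<dots> = mu_sym ((q - 1) div r) \<union> mu_sym ((q + 1) div s)"
    using assms(5-7) by (simp add: power_image_mu mu_sym_def image_Un)
  finally show ?thesis .
qed

end
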